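(* Let $0<p<\infty$ and $0<t<p$. There is a constant $C$ such that for all $y\in\mathbb{R}^n$ and all $f\in L^p(\mathbb{R}^n)$, $$\big\Vert\mathscr{M}^y_tf\big\Vert_{L^p(\mathbb{R}^n)}\le C\big(\ln(e+|y|)\big)^{1/p}\Vert f\Vert_{L^p(\mathbb{R}^n)}.$$
   Context: $\mathcal{D}$ is the set of dyadic cubes in $\mathbb{R}^n$, $\ell(Q)$ the side length of $Q$. For $y\in\mathbb{R}^n$ and $Q\in\mathcal{D}$ let $Q(y):=Q+\ell(Q)y$. The shifted dyadic maximal operator is $\mathscr{M}^yf(x):=\sup_{Q\in\mathcal{D}:x\in Q}\frac{1}{|Q|}\int_{Q(y)}|f(z)|\,dz$, and for $0<t<\infty$, $\mathscr{M}^y_tf:=\big(\mathscr{M}^y(|f|^t)\big)^{1/t}$. $C$ depends only on $n,p,t$. *)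

theory Defs
  imports "HOL-Analysis.Analysis"
begin

text \<open>Real powers of extended nonnegative reals (for exponents r > 0): infinity stays infinity.\<close>
definition epow :: "ennreal \<Rightarrow> real \<Rightarrow> ennreal" where
  "epow a r = (if a = \<infinity> then \<infinity> else ennreal (enn2real a powr r))"

definition dyadic_cube :: "int \<Rightarrow> (int ^ 'n) \<Rightarrow> (real ^ 'n::finite) set" where
  "dyadic_cube k j = {x. \<forall>i. 2 powr k * real_of_int (j $ i) \<le> x $ i
                            \<and> x $ i < 2 powr k * (real_of_int (j $ i) + 1)}"

definition dyadic_side :: "int \<Rightarrow> real" where
  "dyadic_side k = 2 powr k"

definition shifted_cube :: "int \<Rightarrow> (int ^ 'n) \<Rightarrow> (real ^ 'n::finite) \<Rightarrow> (real ^ 'n) set" where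
  "shifted_cube k j y = (\<lambda>z. z + dyadic_side k *\<^sub>R y) ` dyadic_cube k j"

definition shifted_max :: "(real ^ 'n::finite) \<Rightarrow> (real ^ 'n \<Rightarrow> real) \<Rightarrow> real ^ 'n \<Rightarrow> ennreal" where
  "shifted_max y f x =
     (SUP kj \<in> {(k, j). x \<in> dyadic_cube k j}.
        ennreal (1 / measure lebesgue (dyadic_cube (fst kj) (snd kj))) *
        (\<integral>\<^sup>+ z. ennreal \<bar>f z\<bar> * indicator (shifted_cube (fst kj) (snd kj) y) z \<partial>lebesgue))"

definition shifted_max_t :: "(real ^ 'n::finite) \<Rightarrow> real \<Rightarrow> (real ^ 'n \<Rightarrow> real) \<Rightarrow> real ^ 'n \<Rightarrow> ennreal" where
  "shifted_max_t y t f x = epow (shifted_max y (\<lambda>z. \<bar>f z\<bar> powr t) x) (1 / t)"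

definition Lp_norm :: "real \<Rightarrow> (real ^ 'n::finite \<Rightarrow> ennreal) \<Rightarrow> ennreal" where
  "Lp_norm p g = epow (\<integral>\<^sup>+ x. epow (g x) p \<partial>lebesgue) (1 / p)"

definition in_Lp :: "real \<Rightarrow> (real ^ 'n::finite \<Rightarrow> real) \<Rightarrow> bool" where
  "in_Lp p f \<longleftrightarrow> f \<in> borel_measurable lebesgue
      \<and> (\<integral>\<^sup>+ x. ennreal (\<bar>f x\<bar> powr p) \<partial>lebesgue) < \<infinity>"

end

theory Submission
  imports Defs
begin

text \<open>
  A shifted cube \<open>Q(y)\<close> is covered by the \<open>2^n\<close> dyadic cubes of the same side with index
  \<open>j + \<lfloor>y\<rfloor> + e\<^sub>S\<close>, \<open>S \<subseteq> {1..n}\<close>. So \<open>M\<^sup>y\<close> is dominated by \<open>2^n\<close> dyadic maximal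
  functions in which the cube containing \<open>x\<close> is replaced by its translate by an integer vector
  \<open>m\<close>, \<open>|m\<^sub>i| \<le> 2^L\<close>, \<open>L \<approx> log\<^sub>2(|y| + 2)\<close>. Each of these has weak type (1,1) with
  constant \<open>\<approx> 3^n + L\<close>: stop at the maximal dyadic cubes \<open>R\<close> with large average; if the
  selected cube of \<open>x\<close> lies \<open>d\<close> levels below \<open>R\<close>, then \<open>x\<close> lies in \<open>3R\<close> when
  \<open>d \<ge> L\<close>, and otherwise in one of the \<open>L\<close> translates \<open>R - 2^{\<ell>(R) - d} m\<close>. Applying
  this to \<open>g = |f|^t\<close> truncated at half the level, and summing the level sets over the dyadic
  levels \<open>2^k\<close>, gives the strong type \<open>L^{p/t}\<close> bound for \<open>M\<^sup>y g\<close> with a constant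
  \<open>\<approx> ln(e + |y|)\<close>; taking \<open>p\<close>-th roots yields the theorem.
\<close>

lemma nn_integral_count_space_ge_term:
  fixes f :: "'a \<Rightarrow> ennreal"
  assumes "j \<in> I"
  shows "f j \<le> (\<integral>\<^sup>+i. f i \<partial>count_space I)"
proof -
  have "f j = (\<integral>\<^sup>+i. f i * indicator {j} i \<partial>count_space UNIV)"
    by (simp add: nn_integral_count_space_indicator[symmetric] nn_integral_count_space_finite)
  also have "\<dots> \<le> (\<integral>\<^sup>+i. f i * indicator I i \<partial>count_space UNIV)"
    using assms by (intro nn_integral_mono) (auto split: split_indicator)
  also have "\<dots> = (\<integral>\<^sup>+i. f i \<partial>count_space I)"
    by (simp add: nn_integral_count_space_indicator)
  finally show ?thesis .
qed

lemma emeasure_UN_countable_le: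
  assumes "countable I" and X: "\<And>i. i \<in> I \<Longrightarrow> X i \<in> sets M"
  shows "emeasure M (\<Union>(X ` I)) \<le> (\<integral>\<^sup>+i. emeasure M (X i) \<partial>count_space I)"
proof -
  have "emeasure M (\<Union>(X ` I)) = (\<integral>\<^sup>+x. indicator (\<Union>(X ` I)) x \<partial>M)"
    using assms by (intro nn_integral_indicator[symmetric] sets.countable_UN') auto
  also have "\<dots> \<le> (\<integral>\<^sup>+x. (\<integral>\<^sup>+i. indicator (X i) x \<partial>count_space I) \<partial>M)"
    by (intro nn_integral_mono)
      (auto split: split_indicator intro: nn_integral_count_space_ge_term[where f="\<lambda>i. indicator (X i) x" for x, THEN order_trans[rotated]])
  also have "\<dots> = (\<integral>\<^sup>+i. emeasure M (X i) \<partial>count_space I)"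
    using assms by (subst nn_integral_count_space_nn_integral) (auto intro!: nn_integral_cong)
  finally show ?thesis .
qed

lemma ennreal_sum_gt_imp_ex_gt:
  fixes f :: "'a \<Rightarrow> ennreal"
  assumes "of_nat (card A) * c < sum f A"
  shows "\<exists>a\<in>A. c < f a"
proof (rule ccontr)
  assume "\<not> ?thesis"
  then have "sum f A \<le> sum (\<lambda>_. c) A" by (intro sum_mono) (simp add: not_less)
  with assms show False by simp
qed

section \<open>Layer-cake estimate\<close>

lemma epow_ennreal: "0 \<le> v \<Longrightarrow> epow (ennreal v) r = ennreal (v powr r)"
  by (simp add: epow_def)

lemma epow_epow: "0 < t \<Longrightarrow> epow (epow a (1 / t)) p = epow a (p / t)"
  by (simp add: epow_def powr_powr)

lemma epow_le_mult_epow: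
  fixes X J :: ennreal
  assumes X: "X \<le> ennreal K * J" and "J < \<infinity>" "0 \<le> K" "0 < r"
  shows "epow X r \<le> ennreal (K powr r) * epow J r"
proof -
  obtain j where j: "0 \<le> j" "J = ennreal j" using \<open>J < \<infinity>\<close> by (cases J) auto
  with X \<open>0 \<le> K\<close> have "X \<le> ennreal (K * j)" by (simp add: ennreal_mult)
  moreover from this have "X < \<infinity>" by (rule le_less_trans) simp
  ultimately obtain x where x: "0 \<le> x" "X = ennreal x" "x \<le> K * j"
    using j(1) \<open>0 \<le> K\<close> by (cases X) (auto simp: ennreal_le_iff)
  then have "x powr r \<le> (K * j) powr r" using \<open>0 < r\<close> by (intro powr_mono2) auto
  also have "\<dots> = K powr r * j powr r" using \<open>0 \<le> K\<close> j by (intro powr_mult)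
  finally show ?thesis using x j by (simp add: epow_ennreal ennreal_mult[symmetric] ennreal_leI)
qed

lemma nn_integral_int_geometric:
  fixes q B :: real and K :: int
  assumes q: "0 < q" "q < 1" and B: "0 \<le> B"
  shows "(\<integral>\<^sup>+k. (if k \<le> K then ennreal (B * q ^ nat (K - k)) else 0) \<partial>count_space UNIV) = ennreal (B / (1 - q))"
proof -
  define G where "G k = (if k \<le> K then ennreal (B * q ^ nat (K - k)) else 0)" for k
  have "(\<integral>\<^sup>+k. G k \<partial>count_space UNIV) = (\<integral>\<^sup>+k. G k \<partial>count_space {..K})"
    by (rule nn_integral_count_space_eq) (auto simp: G_def)
  also have "\<dots> = (\<integral>\<^sup>+i. G (K - int i) \<partial>count_space UNIV)"
  proof (rule nn_integral_bij_count_space[symmetric])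
    show "bij_betw (\<lambda>i::nat. K - int i) UNIV {..K}"
      unfolding bij_betw_def
    proof
      show "inj (\<lambda>i::nat. K - int i)" by (auto simp: inj_on_def)
      show "range (\<lambda>i::nat. K - int i) = {..K}"
      proof (intro set_eqI iffI)
        fix k assume "k \<in> {..K}"
        then have "k = K - int (nat (K - k))" by simp
        then show "k \<in> range (\<lambda>i::nat. K - int i)" by blast
      qed auto
    qed
  qed
  also have "\<dots> = (\<integral>\<^sup>+i. ennreal (B * q ^ i) \<partial>count_space UNIV)"
    by (rule nn_integral_cong) (simp add: G_def)
  also have "\<dots> = (\<Sum>i. ennreal (B * q ^ i))" by (rule nn_integral_count_space_nat)
  also have "\<dots> = ennreal (\<Sum>i. B * q ^ i)"
    using q B by (intro suminf_ennreal2) (auto intro!: summable_mult summable_geometric)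
  also have "(\<Sum>i. B * q ^ i) = B / (1 - q)"
    using q by (simp add: suminf_mult suminf_geometric summable_geometric)
  finally show ?thesis unfolding G_def .
qed

definition layer_const :: "real \<Rightarrow> real" where
  "layer_const s = 2 powr (2 * s - 1) / (1 - 2 powr (1 - s))"

lemma layer_const_nonneg:
  assumes "1 < s" shows "0 \<le> layer_const s"
proof -
  have "2 powr (1 - s) < 2 powr 0" using assms by (subst powr_less_cancel_iff) auto
  then show ?thesis by (simp add: layer_const_def)
qed

lemma layer_const_bound:
  assumes s: "1 < s" and "0 < v"
  shows "2 powr s * v * 2 powr ((s - 1) * \<lceil>log 2 v\<rceil>) / (1 - 2 powr (1 - s)) \<le> layer_const s * v powr s"
proof -
  have "real_of_int \<lceil>log 2 v\<rceil> \<le> log 2 v + 1" by linarith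
  then have "(s - 1) * \<lceil>log 2 v\<rceil> \<le> (s - 1) * (log 2 v + 1)" using s by (intro mult_left_mono) auto
  then have "2 powr ((s - 1) * \<lceil>log 2 v\<rceil>) \<le> 2 powr ((s - 1) * log 2 v + (s - 1))"
    by (simp add: algebra_simps)
  also have "\<dots> = v powr (s - 1) * 2 powr (s - 1)"
  proof -
    have "2 powr ((s - 1) * log 2 v) = (2 powr log 2 v) powr (s - 1)" by (simp add: powr_powr mult.commute)
    also have "\<dots> = v powr (s - 1)" using \<open>0 < v\<close> by simp
    finally show ?thesis by (simp only: powr_add)
  qed
  finally have "2 powr s * v * 2 powr ((s - 1) * \<lceil>log 2 v\<rceil>) \<le> 2 powr s * v * (v powr (s - 1) * 2 powr (s - 1))"
    using \<open>0 < v\<close> by (intro mult_left_mono) auto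
  also have "\<dots> = 2 powr (2 * s - 1) * v powr s"
    using \<open>0 < v\<close> by (simp add: powr_add[symmetric] algebra_simps powr_mult_base)
  finally have "2 powr s * v * 2 powr ((s - 1) * \<lceil>log 2 v\<rceil>) \<le> 2 powr (2 * s - 1) * v powr s" .
  moreover have "2 powr (1 - s) < 2 powr 0" using s by (subst powr_less_cancel_iff) auto
  ultimately have "2 powr s * v * 2 powr ((s - 1) * \<lceil>log 2 v\<rceil>) / (1 - 2 powr (1 - s))
      \<le> 2 powr (2 * s - 1) * v powr s / (1 - 2 powr (1 - s))"
    by (intro divide_right_mono) auto
  then show ?thesis by (simp add: layer_const_def)
qed

lemma nn_integral_dyadic_levels_le:
  fixes s v :: real
  assumes s: "1 < s" and v: "0 \<le> v"
  shows "(\<integral>\<^sup>+k. ennreal (2 powr ((real_of_int k + 1) * s) / 2 powr (real_of_int k) * (if 2 powr (real_of_int k) / 2 < v then v else 0)) \<partial>count_space (UNIV::int set))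
     \<le> ennreal (layer_const s * v powr s)"
proof (cases "v = 0")
  case True
  then show ?thesis by simp
next
  case False
  then have v0: "0 < v" using v by simp
  define q where "q = 2 powr (1 - s)"
  have q: "0 < q" "q < 1" using s powr_less_cancel_iff[of 2 "1 - s" 0] by (auto simp: q_def)
  \<comment> \<open>only levels \<open>k \<le> K\<close> contribute, with weights decaying geometrically below \<open>K\<close>\<close>
  define K where "K = \<lceil>log 2 v\<rceil>"
  define B where "B = 2 powr s * v * 2 powr ((s - 1) * K)"
  have B0: "0 \<le> B" using v by (simp add: B_def)
  have "(\<integral>\<^sup>+k. ennreal (2 powr ((real_of_int k + 1) * s) / 2 powr (real_of_int k) * (if 2 powr (real_of_int k) / 2 < v then v else 0)) \<partial>count_space (UNIV::int set))
      \<le> (\<integral>\<^sup>+k. (if k \<le> K then ennreal (B * q ^ nat (K - k)) else 0) \<partial>count_space UNIV)"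
  proof (rule nn_integral_mono)
    fix k :: int
    show "ennreal (2 powr ((real_of_int k + 1) * s) / 2 powr (real_of_int k) * (if 2 powr (real_of_int k) / 2 < v then v else 0))
        \<le> (if k \<le> K then ennreal (B * q ^ nat (K - k)) else 0)"
    proof (cases "2 powr (real_of_int k) / 2 < v")
      case True
      have "2 powr (k - 1) < v" using True by (simp add: powr_diff)
      then have "log 2 (2 powr (k - 1)) < log 2 v" using v0 by (subst log_less_cancel_iff) auto
      then have "k - 1 < log 2 v" by simp
      then have kK: "k \<le> K" unfolding K_def by linarith
      have "q ^ nat (K - k) = 2 powr ((1 - s) * (K - k))"
        unfolding q_def using kK by (simp add: powr_power mult.commute)
      then have "B * q ^ nat (K - k) = 2 powr s * v * (2 powr ((s - 1) * K) * 2 powr ((1 - s) * (K - k)))"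
        by (simp add: B_def)
      also have "2 powr ((s - 1) * K) * 2 powr ((1 - s) * (K - k)) = 2 powr ((s - 1) * k)"
        by (simp add: powr_add[symmetric] algebra_simps)
      also have "2 powr s * v * 2 powr ((s - 1) * k) = 2 powr ((real_of_int k + 1) * s) / 2 powr (real_of_int k) * v"
        by (simp add: powr_add[symmetric] powr_diff[symmetric] algebra_simps)
      finally show ?thesis using True kK by simp
    qed simp
  qed
  also have "\<dots> = ennreal (B / (1 - q))" by (rule nn_integral_int_geometric[OF q B0])
  also have "\<dots> \<le> ennreal (layer_const s * v powr s)"
    using layer_const_bound[OF s v0] unfolding B_def K_def q_def by (rule ennreal_leI)
  finally show ?thesis .
qed

lemma epow_le_nn_integral_dyadic_levels:
  fixes a :: ennreal and s :: real and W :: "int \<Rightarrow> 'a set"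
  assumes s: "1 < s" and superlevel: "\<And>k. ennreal (2 powr real_of_int k) < a \<Longrightarrow> x \<in> W k"
  shows "epow a s \<le> (\<integral>\<^sup>+k. ennreal (2 powr ((real_of_int k + 1) * s)) * indicator (W k) x \<partial>count_space (UNIV::int set))"
    (is "_ \<le> ?T")
proof -
  have level_term_le: "ennreal (2 powr ((real_of_int k + 1) * s)) \<le> ?T" if "x \<in> W k" for k
    using nn_integral_count_space_ge_term[of k UNIV "\<lambda>k. ennreal (2 powr ((real_of_int k + 1) * s)) * indicator (W k) x"] that
    by simp
  show ?thesis
  proof (cases "a = top")
    case True
    have "of_nat j \<le> ?T" for j :: nat
    proof -
      have "real j < 2 powr real j" by (simp add: powr_realpow)
      also have "\<dots> \<le> 2 powr ((real j + 1) * s)"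
      proof (rule powr_mono)
        have "real j + 1 \<le> (real j + 1) * s" using s by (simp add: mult_le_cancel_left1)
        then show "real j \<le> (real j + 1) * s" by linarith
      qed simp
      finally have "of_nat j \<le> ennreal (2 powr ((real_of_int (int j) + 1) * s))"
        by (simp add: ennreal_of_nat_eq_real_of_nat ennreal_leI)
      also have "\<dots> \<le> ?T" using True by (intro level_term_le superlevel) simp
      finally show ?thesis .
    qed
    then have "(SUP j. of_nat j :: ennreal) \<le> ?T" by (rule SUP_least)
    then have "?T = top" by (simp add: ennreal_SUP_of_nat_eq_top top_unique)
    then show ?thesis by simp
  next
    case False
    define v where "v = enn2real a"
    have v: "0 \<le> v" "a = ennreal v" using False by (auto simp: v_def less_top)
    have ep: "epow a s = ennreal (v powr s)" using False by (simp add: epow_def v_def)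
    show ?thesis
    proof (cases "v = 0")
      case True then show ?thesis using ep by simp
    next
      case False
      then have v0: "0 < v" using v by simp
      define K where "K = \<lceil>log 2 v\<rceil> - 1"
      have "real_of_int K < log 2 v" unfolding K_def by linarith
      then have "2 powr real_of_int K < 2 powr (log 2 v)" by simp
      then have "2 powr real_of_int K < v" using v0 by simp
      then have "x \<in> W K" using v by (intro superlevel) (simp add: ennreal_less_iff)
      have "log 2 v \<le> real_of_int K + 1" unfolding K_def by linarith
      then have "2 powr (log 2 v) \<le> 2 powr (real_of_int K + 1)" by simp
      then have "v \<le> 2 powr (real_of_int K + 1)" using v0 by simp
      then have "v powr s \<le> (2 powr (real_of_int K + 1)) powr s" using v s by (intro powr_mono2) auto
      also have "\<dots> = 2 powr ((real_of_int K + 1) * s)" by (simp add: powr_powr)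
      finally have "ennreal (v powr s) \<le> ennreal (2 powr ((real_of_int K + 1) * s))" by (rule ennreal_leI)
      also have "\<dots> \<le> ?T" using \<open>x \<in> W K\<close> by (rule level_term_le)
      finally show ?thesis using ep by simp
    qed
  qed
qed

lemma nn_integral_epow_le_of_weak_type:
  fixes F :: "'a \<Rightarrow> ennreal" and g :: "'a \<Rightarrow> real" and A s :: real and W :: "int \<Rightarrow> 'a set"
  assumes g[measurable]: "g \<in> borel_measurable M" and g_nonneg: "\<And>z. 0 \<le> g z"
    and s: "1 < s" and A: "0 \<le> A"
    and W_sets[measurable]: "\<And>k. W k \<in> sets M"
    and superlevel: "\<And>k x. ennreal (2 powr real_of_int k) < F x \<Longrightarrow> x \<in> W k"
    and W_bound: "\<And>k. emeasure M (W k) \<le> ennreal (A / 2 powr real_of_int k) *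
        (\<integral>\<^sup>+z. ennreal (if 2 powr real_of_int k / 2 < g z then g z else 0) \<partial>M)"
  shows "(\<integral>\<^sup>+x. epow (F x) s \<partial>M) \<le> ennreal (A * layer_const s) * (\<integral>\<^sup>+x. ennreal (g x powr s) \<partial>M)"
proof -
  define c where "c k = 2 powr ((real_of_int k + 1) * s)" for k :: int
  define hk where "hk k z = (if 2 powr real_of_int k / 2 < g z then g z else 0)" for k :: int and z
  have [measurable]: "(\<lambda>z. hk k z) \<in> borel_measurable M" for k unfolding hk_def by measurable
  have "(\<integral>\<^sup>+x. epow (F x) s \<partial>M) \<le> (\<integral>\<^sup>+x. (\<integral>\<^sup>+k. ennreal (c k) * indicator (W k) x \<partial>count_space UNIV) \<partial>M)"
    unfolding c_def by (intro nn_integral_mono epow_le_nn_integral_dyadic_levels[OF s] superlevel)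
  also have "\<dots> = (\<integral>\<^sup>+k. (\<integral>\<^sup>+x. ennreal (c k) * indicator (W k) x \<partial>M) \<partial>count_space UNIV)"
    by (intro nn_integral_count_space_nn_integral) auto
  also have "\<dots> = (\<integral>\<^sup>+k. ennreal (c k) * emeasure M (W k) \<partial>count_space UNIV)"
    by (intro nn_integral_cong nn_integral_cmult_indicator W_sets)
  also have "\<dots> \<le> (\<integral>\<^sup>+k. ennreal A * (\<integral>\<^sup>+z. ennreal (c k / 2 powr k * hk k z) \<partial>M) \<partial>count_space UNIV)"
  proof (intro nn_integral_mono)
    fix k :: int
    have "ennreal (c k) * emeasure M (W k) \<le> ennreal (c k) * (ennreal (A / 2 powr k) * (\<integral>\<^sup>+z. ennreal (hk k z) \<partial>M))"
      unfolding hk_def by (intro mult_left_mono W_bound) auto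
    also have "\<dots> = ennreal A * (ennreal (c k / 2 powr k) * (\<integral>\<^sup>+z. ennreal (hk k z) \<partial>M))"
    proof -
      have "ennreal (c k) * ennreal (A / 2 powr k) = ennreal A * ennreal (c k / 2 powr k)"
        using A by (subst (1 2) ennreal_mult[symmetric]) (simp_all add: c_def)
      then show ?thesis by (simp only: mult.assoc[symmetric])
    qed
    also have "\<dots> = ennreal A * (\<integral>\<^sup>+z. ennreal (c k / 2 powr k) * ennreal (hk k z) \<partial>M)"
      by (simp add: nn_integral_cmult)
    also have "\<dots> = ennreal A * (\<integral>\<^sup>+z. ennreal (c k / 2 powr k * hk k z) \<partial>M)"
      using g_nonneg by (intro arg_cong[where f="\<lambda>x. ennreal A * x"] nn_integral_cong ennreal_mult[symmetric])
        (auto simp: c_def hk_def)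
    finally show "ennreal (c k) * emeasure M (W k) \<le> ennreal A * (\<integral>\<^sup>+z. ennreal (c k / 2 powr k * hk k z) \<partial>M)" .
  qed
  also have "\<dots> = ennreal A * (\<integral>\<^sup>+z. (\<integral>\<^sup>+k. ennreal (c k / 2 powr k * hk k z) \<partial>count_space UNIV) \<partial>M)"
    by (simp add: nn_integral_cmult nn_integral_count_space_nn_integral)
  also have "\<dots> \<le> ennreal A * (\<integral>\<^sup>+z. ennreal (layer_const s * g z powr s) \<partial>M)"
    using nn_integral_dyadic_levels_le[OF s g_nonneg] unfolding c_def hk_def
    by (intro mult_left_mono nn_integral_mono) auto
  also have "\<dots> = ennreal (A * layer_const s) * (\<integral>\<^sup>+z. ennreal (g z powr s) \<partial>M)"
    using A layer_const_nonneg[OF s] by (simp add: nn_integral_cmult ennreal_mult mult.assoc)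
  finally show ?thesis .
qed

section \<open>Dyadic cubes and their translates\<close>

definition halfopen_box :: "real^'n::finite \<Rightarrow> real^'n \<Rightarrow> (real^'n) set" where
  "halfopen_box a b = {x. \<forall>i. a$i \<le> x$i \<and> x$i < b$i}"

lemma halfopen_box_borel: "halfopen_box a b \<in> sets borel"
proof -
  have "halfopen_box a b = (\<Inter>i. {x. a$i \<le> x$i} \<inter> {x. x$i < b$i})"
    by (auto simp: halfopen_box_def)
  then show ?thesis
    by (auto intro!: sets.finite_INT sets.Int borel_closed borel_open
        closed_halfspace_component_ge_cart open_halfspace_component_lt_cart)
qed

lemma halfopen_box_lebesgue [measurable]: "halfopen_box a b \<in> sets lebesgue"
  using halfopen_box_borel by (metis sets_completionI_sets sets_lborel)

lemma emeasure_halfopen_box: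
  fixes a b :: "real^'n::finite"
  assumes "\<And>i. a$i \<le> b$i"
  shows "emeasure lebesgue (halfopen_box a b) = ennreal (\<Prod>i\<in>UNIV. b$i - a$i)"
proof -
  have "a \<in> cbox a b" using assms by (simp add: mem_box_cart)
  then have "cbox a b \<noteq> {}" by auto
  then have cbox: "emeasure lborel (cbox a b) = ennreal (\<Prod>i\<in>UNIV. b$i - a$i)"
    using emeasure_lborel_cbox_finite[of a b] emeasure_eq_ennreal_measure[of lborel "cbox a b"]
    by (simp add: content_cbox_cart)
  then have box: "emeasure lborel (box a b) = ennreal (\<Prod>i\<in>UNIV. b$i - a$i)"
    by (metis emeasure_lborel_box_eq emeasure_lborel_cbox_eq)
  have "emeasure lborel (box a b) \<le> emeasure lborel (halfopen_box a b)"
    by (rule emeasure_mono) (auto simp: halfopen_box_def mem_box_cart halfopen_box_borel less_imp_le)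
  moreover have "emeasure lborel (halfopen_box a b) \<le> emeasure lborel (cbox a b)"
    by (rule emeasure_mono) (auto simp: halfopen_box_def mem_box_cart less_imp_le)
  ultimately have "emeasure lborel (halfopen_box a b) = ennreal (\<Prod>i\<in>UNIV. b$i - a$i)"
    using cbox box by auto
  then show ?thesis
    using halfopen_box_borel[of a b] by (simp add: emeasure_completion)
qed

lemma translate_preimage_halfopen_box:
  "{x. x + v \<in> halfopen_box a b} = halfopen_box (a - v) (b - v)"
  by (auto simp: halfopen_box_def algebra_simps)

definition dyadic_index :: "int \<Rightarrow> real^'n::finite \<Rightarrow> int^'n" where
  "dyadic_index k x = (\<chi> i. \<lfloor>x$i / 2 powr k\<rfloor>)"

definition of_int_vec :: "int^'n::finite \<Rightarrow> real^'n" where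
  "of_int_vec m = (\<chi> i. real_of_int (m$i))"

lemma mem_dyadic_cube_iff: "x \<in> dyadic_cube k j \<longleftrightarrow> dyadic_index k x = j"
proof -
  have "2 powr k * real_of_int (j$i) \<le> x$i \<and> x$i < 2 powr k * (real_of_int (j$i) + 1)
      \<longleftrightarrow> \<lfloor>x$i / 2 powr k\<rfloor> = j$i" for i
    unfolding floor_eq_iff by (simp add: pos_le_divide_eq pos_divide_less_eq mult.commute)
  then show ?thesis
    unfolding dyadic_cube_def dyadic_index_def by (auto simp: vec_eq_iff)
qed

lemma dyadic_cube_eq_halfopen_box:
  "dyadic_cube k j = halfopen_box (2 powr k *\<^sub>R of_int_vec j) (2 powr k *\<^sub>R (of_int_vec j + 1))"
  unfolding dyadic_cube_def halfopen_box_def of_int_vec_def by auto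

lemma dyadic_cube_lebesgue [measurable]: "dyadic_cube k j \<in> sets lebesgue"
  unfolding dyadic_cube_eq_halfopen_box by (rule halfopen_box_lebesgue)

lemma emeasure_translated_dyadic_cube:
  "emeasure lebesgue {x. x + v \<in> dyadic_cube k (j::int^'n::finite)} = ennreal ((2 powr k) ^ CARD('n))"
  unfolding dyadic_cube_eq_halfopen_box translate_preimage_halfopen_box
  by (subst emeasure_halfopen_box) (auto simp: algebra_simps of_int_vec_def)

lemma emeasure_dyadic_cube:
  "emeasure lebesgue (dyadic_cube k (j::int^'n::finite)) = ennreal ((2 powr k) ^ CARD('n))"
  using emeasure_translated_dyadic_cube[of 0 k j] by simp

lemma measure_dyadic_cube:
  "measure lebesgue (dyadic_cube k (j::int^'n::finite)) = (2 powr k) ^ CARD('n)"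
  unfolding measure_def emeasure_dyadic_cube by simp

lemma shifted_cube_eq_translate: "shifted_cube k j y = {x. x + (- dyadic_side k *\<^sub>R y) \<in> dyadic_cube k j}"
  unfolding shifted_cube_def by (auto simp: image_iff intro!: bexI[of _ "x - dyadic_side k *\<^sub>R y" for x])

lemma shifted_cube_lebesgue [measurable]: "shifted_cube k j y \<in> sets lebesgue"
  unfolding shifted_cube_eq_translate dyadic_cube_eq_halfopen_box translate_preimage_halfopen_box
  by (rule halfopen_box_lebesgue)

lemma emeasure_shifted_cube:
  "emeasure lebesgue (shifted_cube k j (y::real^'n::finite)) = ennreal ((2 powr k) ^ CARD('n))"
  unfolding shifted_cube_eq_translate by (rule emeasure_translated_dyadic_cube)

lemma dyadic_index_coarsen: "dyadic_index (k + int d) x = (\<chi> i. dyadic_index k x $ i div 2^d)"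
proof -
  have "\<lfloor>x$i / 2 powr (k + int d)\<rfloor> = \<lfloor>x$i / 2 powr k\<rfloor> div 2^d" for i
  proof -
    have "2 powr (k + int d) = 2 powr k * real_of_int (2^d)"
      by (simp add: powr_add powr_realpow)
    then have "x$i / 2 powr (k + int d) = (x$i / 2 powr k) / real_of_int (2^d)"
      by (simp only: divide_divide_eq_left)
    then show ?thesis by (simp only:) (rule floor_divide_real_eq_div, simp)
  qed
  then show ?thesis unfolding dyadic_index_def by (simp add: vec_eq_iff)
qed

lemma dyadic_index_translate:
  "dyadic_index k (x + 2 powr k *\<^sub>R of_int_vec m) = dyadic_index k x + m"
proof -
  have "(x$i + 2 powr k * real_of_int (m$i)) / 2 powr k = x$i / 2 powr k + real_of_int (m$i)" for i
    by (simp add: field_simps)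
  then show ?thesis unfolding dyadic_index_def of_int_vec_def by (simp add: vec_eq_iff)
qed

definition dyadic_cube_of :: "int \<times> (int^'n::finite) \<Rightarrow> (real^'n) set" where
  "dyadic_cube_of R = dyadic_cube (fst R) (snd R)"

lemma dyadic_cube_of_lebesgue [measurable]: "dyadic_cube_of R \<in> sets lebesgue"
  by (simp add: dyadic_cube_of_def)

definition dyadic_ancestor :: "int \<times> (int^'n::finite) \<Rightarrow> nat \<Rightarrow> int \<times> (int^'n)" where
  "dyadic_ancestor R d = (fst R + int d, \<chi> i. snd R $ i div 2^d)"

lemma dyadic_ancestor_0 [simp]: "dyadic_ancestor R 0 = R"
  by (simp add: dyadic_ancestor_def vec_eq_iff)

lemma dyadic_ancestor_ancestor: "dyadic_ancestor (dyadic_ancestor R a) b = dyadic_ancestor R (a + b)"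
  by (simp add: dyadic_ancestor_def vec_eq_iff power_add zdiv_zmult2_eq)

lemma mem_dyadic_ancestor:
  "x \<in> dyadic_cube_of R \<Longrightarrow> x \<in> dyadic_cube_of (dyadic_ancestor R d)"
  by (cases R) (simp add: dyadic_cube_of_def mem_dyadic_cube_iff dyadic_ancestor_def dyadic_index_coarsen)

lemma dyadic_cubes_nested:
  assumes "x \<in> dyadic_cube_of (k1, r1)" "x \<in> dyadic_cube_of (k2, r2)" "k1 \<le> k2"
  shows "(k2, r2) = dyadic_ancestor (k1, r1) (nat (k2 - k1))"
proof -
  have level: "k2 = k1 + int (nat (k2 - k1))" using assms(3) by simp
  have "r2 = dyadic_index (k1 + int (nat (k2 - k1))) x"
    using assms(2) level by (simp add: dyadic_cube_of_def mem_dyadic_cube_iff)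
  also have "\<dots> = (\<chi> i. r1 $ i div 2 ^ nat (k2 - k1))"
    using assms(1) by (subst dyadic_index_coarsen) (simp add: dyadic_cube_of_def mem_dyadic_cube_iff)
  finally show ?thesis using level by (simp add: dyadic_ancestor_def)
qed

definition maximal_dyadic :: "(int \<times> (int^'n::finite)) set \<Rightarrow> (int \<times> (int^'n)) set" where
  "maximal_dyadic S = {R\<in>S. \<forall>d>0. dyadic_ancestor R d \<notin> S}"

lemma ex_maximal_dyadic_ancestor:
  assumes bounded: "\<And>R. R \<in> S \<Longrightarrow> fst R \<le> K" and "R \<in> S"
  shows "\<exists>d. dyadic_ancestor R d \<in> maximal_dyadic S"
proof -
  define D where "D = {d. dyadic_ancestor R d \<in> S}"
  have "d \<le> nat (K - fst R)" if "d \<in> D" for d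
    using bounded[of "dyadic_ancestor R d"] that by (simp add: D_def dyadic_ancestor_def)
  then have "finite D" by (meson finite_nat_set_iff_bounded_le)
  moreover have "0 \<in> D" using \<open>R \<in> S\<close> by (simp add: D_def)
  ultimately have max: "Max D \<in> D" "\<And>d. d \<in> D \<Longrightarrow> d \<le> Max D"
    by (auto intro: Max_in)
  have "dyadic_ancestor (dyadic_ancestor R (Max D)) d \<notin> S" if "d > 0" for d
  proof
    assume "dyadic_ancestor (dyadic_ancestor R (Max D)) d \<in> S"
    then have "Max D + d \<in> D" by (simp add: D_def dyadic_ancestor_ancestor)
    then show False using max(2)[of "Max D + d"] that by simp
  qed
  moreover have "dyadic_ancestor R (Max D) \<in> S" using max(1) by (simp add: D_def)
  ultimately have "dyadic_ancestor R (Max D) \<in> maximal_dyadic S"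
    unfolding maximal_dyadic_def by blast
  then show ?thesis ..
qed

lemma disjoint_maximal_dyadic: "disjoint_family_on dyadic_cube_of (maximal_dyadic S)"
proof -
  have same: "R1 = R2" if R: "R1 \<in> maximal_dyadic S" "R2 \<in> maximal_dyadic S"
    and x: "x \<in> dyadic_cube_of R1" "x \<in> dyadic_cube_of R2" and le: "fst R1 \<le> fst R2" for R1 R2 x
  proof -
    define d where "d = nat (fst R2 - fst R1)"
    have R2: "R2 = dyadic_ancestor R1 d"
      using dyadic_cubes_nested[of x "fst R1" "snd R1" "fst R2" "snd R2"] x le by (simp add: d_def)
    have "d = 0"
    proof (rule ccontr)
      assume "d \<noteq> 0"
      then have "dyadic_ancestor R1 d \<notin> S" using R(1) by (simp add: maximal_dyadic_def)
      moreover have "R2 \<in> S" using R(2) by (simp add: maximal_dyadic_def)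
      ultimately show False using R2 by simp
    qed
    then show ?thesis using R2 by simp
  qed
  show ?thesis
    unfolding disjoint_family_on_def
  proof (intro ballI impI)
    fix R1 R2 assume R: "R1 \<in> maximal_dyadic S" "R2 \<in> maximal_dyadic S" "R1 \<noteq> R2"
    show "dyadic_cube_of R1 \<inter> dyadic_cube_of R2 = {}"
    proof (cases "fst R1 \<le> fst R2")
      case True then show ?thesis using same[OF R(1,2)] R(3) by blast
    next
      case False then show ?thesis using same[OF R(2,1)] R(3) by fastforce
    qed
  qed
qed

definition tripled_dyadic_cube :: "int \<times> (int^'n::finite) \<Rightarrow> (real^'n) set" where
  "tripled_dyadic_cube R =
     halfopen_box (2 powr real_of_int (fst R) *\<^sub>R (of_int_vec (snd R) - 1)) (2 powr real_of_int (fst R) *\<^sub>R (of_int_vec (snd R) + 2))"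

lemma emeasure_tripled_dyadic_cube:
  "emeasure lebesgue (tripled_dyadic_cube (R :: int \<times> (int^'n::finite)))
     = ennreal (3 ^ CARD('n) * (2 powr real_of_int (fst R)) ^ CARD('n))"
  unfolding tripled_dyadic_cube_def
  by (subst emeasure_halfopen_box) (auto simp: algebra_simps power_mult_distrib of_int_vec_def)

lemma translated_dyadic_cube_subset_tripled:
  assumes v: "\<And>i. \<bar>v$i\<bar> \<le> 2 powr real_of_int (fst R)"
  shows "{x. x + v \<in> dyadic_cube_of R} \<subseteq> tripled_dyadic_cube R"
proof
  fix x assume "x \<in> {x. x + v \<in> dyadic_cube_of R}"
  then have bounds: "2 powr fst R * real_of_int (snd R $ i) \<le> x$i + v$i"
    "x$i + v$i < 2 powr fst R * real_of_int (snd R $ i) + 2 powr fst R" for i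
    by (auto simp: dyadic_cube_of_def dyadic_cube_def algebra_simps)
  then have "2 powr fst R * real_of_int (snd R $ i) - 2 powr fst R \<le> x$i"
    "x$i < 2 powr fst R * real_of_int (snd R $ i) + 2 * 2 powr fst R" for i
    using v[of i] bounds[of i] unfolding abs_le_iff by linarith+
  then show "x \<in> tripled_dyadic_cube R"
    unfolding tripled_dyadic_cube_def halfopen_box_def of_int_vec_def
    by (simp add: algebra_simps)
qed

text \<open>The points a selected cube \<open>R\<close> can be charged with: the tripled cube \<open>3R\<close> and the
  translates of \<open>R\<close> arising from selected cubes at most \<open>L\<close> levels below \<open>R\<close>.\<close>

definition translation_shadow :: "int^'n::finite \<Rightarrow> nat \<Rightarrow> int \<times> (int^'n) \<Rightarrow> (real^'n) set" where
  "translation_shadow m L R = tripled_dyadic_cube R \<union>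
     (\<Union>d<L. {x. x + 2 powr real_of_int (fst R - int d) *\<^sub>R of_int_vec m \<in> dyadic_cube_of R})"

lemma translated_dyadic_cube_lebesgue [measurable]: "{x. x + v \<in> dyadic_cube_of R} \<in> sets lebesgue"
  unfolding dyadic_cube_of_def dyadic_cube_eq_halfopen_box translate_preimage_halfopen_box by simp

lemma translation_shadow_lebesgue [measurable]: "translation_shadow m L R \<in> sets lebesgue"
  unfolding translation_shadow_def tripled_dyadic_cube_def by measurable

lemma emeasure_translation_shadow_le:
  "emeasure lebesgue (translation_shadow m L (R :: int \<times> (int^'n::finite)))
     \<le> ennreal ((3 ^ CARD('n) + real L) * (2 powr real_of_int (fst R)) ^ CARD('n))"
proof -
  let ?T = "\<lambda>d. {x. x + 2 powr real_of_int (fst R - int d) *\<^sub>R of_int_vec m \<in> dyadic_cube_of R}"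
  let ?v = "(2 powr real_of_int (fst R)) ^ CARD('n)"
  have "emeasure lebesgue (translation_shadow m L R)
      \<le> emeasure lebesgue (tripled_dyadic_cube R) + emeasure lebesgue (\<Union>d<L. ?T d)"
    unfolding translation_shadow_def tripled_dyadic_cube_def by (rule emeasure_subadditive) auto
  also have "emeasure lebesgue (\<Union>d<L. ?T d) \<le> (\<Sum>d<L. emeasure lebesgue (?T d))"
    by (rule emeasure_subadditive_finite) auto
  also have "\<dots> = ennreal (real L * ?v)"
    by (simp add: dyadic_cube_of_def emeasure_translated_dyadic_cube ennreal_of_nat_eq_real_of_nat ennreal_mult)
  finally show ?thesis
    by (simp add: emeasure_tripled_dyadic_cube distrib_right ennreal_plus)
qed

lemma mem_translation_shadow:
  assumes m: "\<And>i. \<bar>m$i\<bar> \<le> 2^L"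
  shows "x \<in> translation_shadow m L (dyadic_ancestor (k, dyadic_index k x + m) d)"
proof -
  define R where "R = dyadic_ancestor (k, dyadic_index k x + m) d"
  have level: "fst R = k + int d" by (simp add: R_def dyadic_ancestor_def)
  have "x + 2 powr k *\<^sub>R of_int_vec m \<in> dyadic_cube_of (k, dyadic_index k x + m)"
    by (simp add: dyadic_cube_of_def mem_dyadic_cube_iff dyadic_index_translate)
  then have x: "x + 2 powr k *\<^sub>R of_int_vec m \<in> dyadic_cube_of R"
    unfolding R_def by (rule mem_dyadic_ancestor)
  show ?thesis
  proof (cases "d < L")
    case True
    have "x + 2 powr real_of_int (fst R - int d) *\<^sub>R of_int_vec m \<in> dyadic_cube_of R"
      using x level by simp
    then show ?thesis using True unfolding translation_shadow_def R_def[symmetric] by blast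
  next
    case False
    have "\<bar>2 powr k * real_of_int (m$i)\<bar> \<le> 2 powr real_of_int (fst R)" for i
    proof -
      have "\<bar>real_of_int (m$i)\<bar> \<le> 2 powr real L"
        using m[of i] by (simp add: powr_realpow) (metis of_int_abs of_int_le_iff of_int_numeral of_int_power)
      also have "\<dots> \<le> 2 powr real d" using False by simp
      finally have "2 powr k * \<bar>real_of_int (m$i)\<bar> \<le> 2 powr k * 2 powr real d"
        by (intro mult_left_mono) auto
      then show ?thesis by (simp add: level powr_add abs_mult)
    qed
    then have "x \<in> tripled_dyadic_cube R"
      using translated_dyadic_cube_subset_tripled[of "2 powr k *\<^sub>R of_int_vec m" R] x
      by (auto simp: of_int_vec_def)
    then show ?thesis unfolding translation_shadow_def R_def[symmetric] by blast
  qed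
qed

section \<open>Weak type estimates\<close>

lemma nn_integral_maximal_dyadic_le:
  assumes "sets N = sets lebesgue"
  shows "(\<integral>\<^sup>+R. emeasure N (dyadic_cube_of R) \<partial>count_space (maximal_dyadic S))
           \<le> emeasure N (space N)"
proof -
  have "(\<integral>\<^sup>+R. emeasure N (dyadic_cube_of R) \<partial>count_space (maximal_dyadic S))
      = emeasure N (\<Union>(dyadic_cube_of ` maximal_dyadic S))"
    using assms disjoint_maximal_dyadic
    by (intro emeasure_UN_countable[symmetric]) auto
  also have "\<dots> \<le> emeasure N (space N)" by (rule emeasure_space)
  finally show ?thesis .
qed

lemma dyadic_level_le:
  fixes \<mu> I :: real
  assumes "0 < \<mu>" "0 < n" and lt: "\<mu> * (2 powr real_of_int k) ^ n < I"
  shows "k \<le> max 0 \<lceil>I / \<mu>\<rceil>"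
proof (rule ccontr)
  assume "\<not> ?thesis"
  then have "0 \<le> k" "\<lceil>I / \<mu>\<rceil> < k" by auto
  moreover from this(2) have "I / \<mu> < real_of_int k" by (simp add: ceiling_less_iff)
  ultimately obtain j where k: "k = int j" "I / \<mu> < real j" by (metis nonneg_eq_int of_int_of_nat_eq)
  have "real j < 2 ^ j" by (rule of_nat_less_two_power)
  also have "\<dots> \<le> (2 ^ j) ^ n" using \<open>0 < n\<close> by (simp add: self_le_power)
  finally have "\<mu> * real j < \<mu> * (2 powr real_of_int k) ^ n"
    using k \<open>0 < \<mu>\<close> by (simp add: powr_realpow)
  moreover have "I < \<mu> * real j" using k \<open>0 < \<mu>\<close> by (simp add: pos_divide_less_eq mult.commute)
  ultimately show False using lt by simp
qed

lemma weak_type_translated_dyadic_average: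
  fixes h :: "real^'n::finite \<Rightarrow> real" and m :: "int^'n"
  assumes h [measurable]: "h \<in> borel_measurable lebesgue" and "\<And>z. 0 \<le> h z"
    and \<mu>: "0 < \<mu>" and m: "\<And>i. \<bar>m$i\<bar> \<le> 2^L"
  shows "\<exists>W\<in>sets lebesgue.
           {x. \<exists>k. ennreal (\<mu> * (2 powr real_of_int k) ^ CARD('n))
                 < (\<integral>\<^sup>+z. ennreal (h z) * indicator (dyadic_cube k (dyadic_index k x + m)) z \<partial>lebesgue)} \<subseteq> W
         \<and> emeasure lebesgue W \<le> ennreal ((3 ^ CARD('n) + real L) / \<mu>) * (\<integral>\<^sup>+z. ennreal (h z) \<partial>lebesgue)"
    (is "\<exists>W\<in>_. ?Bad \<subseteq> W \<and> _ \<le> ennreal ?c * ?I")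
proof (cases "?I = \<infinity>")
  case True
  then show ?thesis using \<mu> by (intro bexI[of _ UNIV]) (auto simp: ennreal_mult_top add_nonneg_eq_0_iff)
next
  case False
  define N where "N = density lebesgue (\<lambda>z. ennreal (h z))"
  have N_cube: "(\<integral>\<^sup>+z. ennreal (h z) * indicator (dyadic_cube k j) z \<partial>lebesgue) = emeasure N (dyadic_cube k j)"
    for k j unfolding N_def by (rule emeasure_density[symmetric]) auto
  have N_space: "emeasure N (space N) = ?I" by (simp add: N_def emeasure_density)
  let ?vol = "\<lambda>R :: int \<times> (int^'n). (2 powr real_of_int (fst R)) ^ CARD('n)"
  define S where "S = {R. ennreal (\<mu> * ?vol R) < emeasure N (dyadic_cube_of R)}"
  have bounded: "fst R \<le> max 0 \<lceil>enn2real ?I / \<mu>\<rceil>" if "R \<in> S" for R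
  proof (rule dyadic_level_le[OF \<mu>])
    have "ennreal (\<mu> * ?vol R) < ?I"
      using that emeasure_space[of N "dyadic_cube_of R"] by (simp add: S_def N_space)
    then show "\<mu> * ?vol R < enn2real ?I"
      using False \<mu> by (cases ?I) (auto simp: ennreal_less_iff)
  qed simp
  have countable: "countable (maximal_dyadic S)" by (rule countable_subset[OF subset_UNIV]) simp
  define W where "W = (\<Union>R\<in>maximal_dyadic S. translation_shadow m L R)"
  have "W \<in> sets lebesgue" unfolding W_def using countable by (intro sets.countable_UN') auto
  moreover have "?Bad \<subseteq> W"
  proof
    fix x assume "x \<in> ?Bad"
    then obtain k where "ennreal (\<mu> * (2 powr real_of_int k) ^ CARD('n))
        < (\<integral>\<^sup>+z. ennreal (h z) * indicator (dyadic_cube k (dyadic_index k x + m)) z \<partial>lebesgue)"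
      by blast
    then have "(k, dyadic_index k x + m) \<in> S"
      by (simp only: S_def N_cube mem_Collect_eq fst_conv snd_conv dyadic_cube_of_def)
    then obtain d where "dyadic_ancestor (k, dyadic_index k x + m) d \<in> maximal_dyadic S"
      using ex_maximal_dyadic_ancestor[OF bounded] by blast
    then show "x \<in> W" using mem_translation_shadow[OF m] unfolding W_def by blast
  qed
  moreover have "emeasure lebesgue W \<le> ennreal ?c * ?I"
  proof -
    have "emeasure lebesgue W \<le> (\<integral>\<^sup>+R. emeasure lebesgue (translation_shadow m L R) \<partial>count_space (maximal_dyadic S))"
      unfolding W_def using countable by (intro emeasure_UN_countable_le) auto
    also have "\<dots> \<le> (\<integral>\<^sup>+R. ennreal ?c * emeasure N (dyadic_cube_of R) \<partial>count_space (maximal_dyadic S))"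
    proof (intro nn_integral_mono)
      fix R assume "R \<in> space (count_space (maximal_dyadic S))"
      then have "ennreal (\<mu> * ?vol R) \<le> emeasure N (dyadic_cube_of R)"
        by (simp add: maximal_dyadic_def S_def less_imp_le)
      then have "ennreal ?c * ennreal (\<mu> * ?vol R) \<le> ennreal ?c * emeasure N (dyadic_cube_of R)"
        by (rule mult_left_mono) simp
      moreover have "ennreal ?c * ennreal (\<mu> * ?vol R) = ennreal ((3 ^ CARD('n) + real L) * ?vol R)"
        using \<mu> by (simp add: ennreal_mult[symmetric])
      ultimately show "emeasure lebesgue (translation_shadow m L R) \<le> ennreal ?c * emeasure N (dyadic_cube_of R)"
        using emeasure_translation_shadow_le[of m L R] by simp
    qed
    also have "\<dots> = ennreal ?c * (\<integral>\<^sup>+R. emeasure N (dyadic_cube_of R) \<partial>count_space (maximal_dyadic S))"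
      by (rule nn_integral_cmult) simp
    also have "\<dots> \<le> ennreal ?c * ?I"
      using nn_integral_maximal_dyadic_le[of N S] N_space by (intro mult_left_mono) (auto simp: N_def)
    finally show ?thesis .
  qed
  ultimately show ?thesis by blast
qed

definition floor_vec :: "real^'n::finite \<Rightarrow> int^'n" where
  "floor_vec y = (\<chi> i. \<lfloor>y$i\<rfloor>)"

definition indicator_vec :: "'n::finite set \<Rightarrow> int^'n" where
  "indicator_vec S = (\<chi> i. if i \<in> S then 1 else 0)"

lemma shifted_cube_subset_UN_dyadic:
  "shifted_cube k j y \<subseteq> (\<Union>S. dyadic_cube k (j + floor_vec y + indicator_vec S))"
proof
  fix w assume "w \<in> shifted_cube k j y"
  then obtain z where z: "dyadic_index k z = j" and w: "w = z + 2 powr k *\<^sub>R y"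
    by (auto simp: shifted_cube_def dyadic_side_def mem_dyadic_cube_iff)
  define S where "S = {i. dyadic_index k w $ i \<noteq> j$i + \<lfloor>y$i\<rfloor>}"
  have "dyadic_index k w $ i = j$i + \<lfloor>y$i\<rfloor> + indicator_vec S $ i" for i
  proof -
    have "w$i / 2 powr k = z$i / 2 powr k + y$i" using w by (simp add: field_simps)
    then have "dyadic_index k w $ i = \<lfloor>z$i / 2 powr k + y$i\<rfloor>" by (simp add: dyadic_index_def)
    then have "dyadic_index k w $ i \<in> {j$i + \<lfloor>y$i\<rfloor>, j$i + \<lfloor>y$i\<rfloor> + 1}"
      using floor_add[of "z$i / 2 powr k" "y$i"] z by (auto simp: dyadic_index_def split: if_splits)
    then show ?thesis by (auto simp: indicator_vec_def S_def)
  qed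
  then have "dyadic_index k w = j + floor_vec y + indicator_vec S" by (simp add: vec_eq_iff floor_vec_def)
  then show "w \<in> (\<Union>S. dyadic_cube k (j + floor_vec y + indicator_vec S))" by (auto simp: mem_dyadic_cube_iff)
qed

lemma shifted_average_gt_imp_dyadic_average_gt:
  fixes g :: "real^'n::finite \<Rightarrow> real"
  assumes g [measurable]: "g \<in> borel_measurable lebesgue" and "\<And>z. 0 \<le> g z" and "0 < \<alpha>"
    and gt: "ennreal (\<alpha> * (2 powr k) ^ CARD('n))
               < (\<integral>\<^sup>+z. ennreal (g z) * indicator (shifted_cube k j y) z \<partial>lebesgue)"
  defines "h \<equiv> \<lambda>z. if \<alpha> / 2 < g z then g z else 0"
  shows "\<exists>S. ennreal (\<alpha> / (2 * 2 ^ CARD('n)) * (2 powr k) ^ CARD('n))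
             < (\<integral>\<^sup>+z. ennreal (h z) * indicator (dyadic_cube k (j + floor_vec y + indicator_vec S)) z \<partial>lebesgue)"
proof -
  let ?v = "(2 powr k) ^ CARD('n)"
  let ?Q = "\<lambda>S. dyadic_cube k (j + floor_vec y + indicator_vec S)"
  have [measurable]: "h \<in> borel_measurable lebesgue" unfolding h_def by measurable
  have "(\<integral>\<^sup>+z. ennreal (g z) * indicator (shifted_cube k j y) z \<partial>lebesgue)
      \<le> (\<integral>\<^sup>+z. ennreal (h z) * indicator (shifted_cube k j y) z
                + ennreal (\<alpha> / 2) * indicator (shifted_cube k j y) z \<partial>lebesgue)"
    by (intro nn_integral_mono) (auto simp: h_def ennreal_plus[symmetric] ennreal_leI split: split_indicator simp del: ennreal_plus)
  also have "\<dots> = ennreal (\<alpha> / 2 * ?v) + (\<integral>\<^sup>+z. ennreal (h z) * indicator (shifted_cube k j y) z \<partial>lebesgue)"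
    using \<open>0 < \<alpha>\<close> by (subst nn_integral_add)
      (auto simp: nn_integral_cmult_indicator emeasure_shifted_cube ennreal_mult[symmetric] add.commute
        simp del: ennreal_mult')
  finally have "ennreal (\<alpha> / 2 * ?v) + ennreal (\<alpha> / 2 * ?v)
      < ennreal (\<alpha> / 2 * ?v) + (\<integral>\<^sup>+z. ennreal (h z) * indicator (shifted_cube k j y) z \<partial>lebesgue)"
    using gt \<open>0 < \<alpha>\<close> by (simp add: ennreal_plus[symmetric] del: ennreal_plus)
  then have "ennreal (\<alpha> / 2 * ?v) < (\<integral>\<^sup>+z. ennreal (h z) * indicator (shifted_cube k j y) z \<partial>lebesgue)"
    by (simp add: ennreal_add_left_cancel_less)
  also have "\<dots> \<le> (\<integral>\<^sup>+z. (\<Sum>S\<in>UNIV. ennreal (h z) * indicator (?Q S) z) \<partial>lebesgue)"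
  proof (intro nn_integral_mono)
    fix z
    show "ennreal (h z) * indicator (shifted_cube k j y) z \<le> (\<Sum>S\<in>UNIV. ennreal (h z) * indicator (?Q S) z)"
    proof (cases "z \<in> shifted_cube k j y")
      case True
      then obtain S0 where "z \<in> ?Q S0" using shifted_cube_subset_UN_dyadic by blast
      then show ?thesis using True member_le_sum[of S0 UNIV "\<lambda>S. ennreal (h z) * indicator (?Q S) z"] by simp
    qed simp
  qed
  also have "\<dots> = (\<Sum>S\<in>UNIV. \<integral>\<^sup>+z. ennreal (h z) * indicator (?Q S) z \<partial>lebesgue)"
    by (rule nn_integral_sum) auto
  finally have sum_gt: "ennreal (\<alpha> / 2 * ?v) < (\<Sum>S\<in>UNIV. \<integral>\<^sup>+z. ennreal (h z) * indicator (?Q S) z \<partial>lebesgue)" .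
  have "card (UNIV :: 'n set set) = 2 ^ CARD('n)" using card_Pow[of "UNIV :: 'n set"] by (simp add: Pow_UNIV)
  then have "of_nat (card (UNIV :: 'n set set)) * ennreal (\<alpha> / (2 * 2 ^ CARD('n)) * ?v)
      = ennreal (2 ^ CARD('n) * (\<alpha> / (2 * 2 ^ CARD('n)) * ?v))"
    by (subst ennreal_mult') (simp_all add: ennreal_of_nat_eq_real_of_nat)
  also have "2 ^ CARD('n) * (\<alpha> / (2 * 2 ^ CARD('n)) * ?v) = \<alpha> / 2 * ?v" by simp
  finally have "of_nat (card (UNIV :: 'n set set)) * ennreal (\<alpha> / (2 * 2 ^ CARD('n)) * ?v)
      < (\<Sum>S\<in>UNIV. \<integral>\<^sup>+z. ennreal (h z) * indicator (?Q S) z \<partial>lebesgue)"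
    using sum_gt by (simp only:)
  from ennreal_sum_gt_imp_ex_gt[OF this] show ?thesis by blast
qed

lemma less_shifted_max_imp_average_gt:
  fixes g :: "real^'n::finite \<Rightarrow> real"
  assumes "ennreal \<alpha> < shifted_max y g x" "0 \<le> \<alpha>"
  shows "\<exists>k. ennreal (\<alpha> * (2 powr k) ^ CARD('n))
           < (\<integral>\<^sup>+z. ennreal \<bar>g z\<bar> * indicator (shifted_cube k (dyadic_index k x) y) z \<partial>lebesgue)"
proof -
  obtain k j where "x \<in> dyadic_cube k j"
    and lt: "ennreal \<alpha> < ennreal (1 / (2 powr k) ^ CARD('n)) *
        (\<integral>\<^sup>+z. ennreal \<bar>g z\<bar> * indicator (shifted_cube k j y) z \<partial>lebesgue)"
    using assms(1) unfolding shifted_max_def by (auto simp: less_SUP_iff measure_dyadic_cube)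
  then have j: "j = dyadic_index k x" by (simp add: mem_dyadic_cube_iff)
  have "ennreal (\<alpha> * (2 powr k) ^ CARD('n))
      < (\<integral>\<^sup>+z. ennreal \<bar>g z\<bar> * indicator (shifted_cube k j y) z \<partial>lebesgue)"
  proof (cases "\<integral>\<^sup>+z. ennreal \<bar>g z\<bar> * indicator (shifted_cube k j y) z \<partial>lebesgue")
    case (real r)
    then have "\<alpha> < r / (2 powr k) ^ CARD('n)"
      using lt assms(2) by (simp add: ennreal_mult[symmetric] ennreal_less_iff del: ennreal_mult')
    then show ?thesis using real assms(2) by (simp add: ennreal_less_iff pos_less_divide_eq)
  qed simp
  then show ?thesis unfolding j by blast
qed

definition shift_log :: "real^'n::finite \<Rightarrow> nat" where
  "shift_log y = nat \<lceil>log 2 (norm y + 2)\<rceil>"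

lemma abs_floor_vec_plus_indicator_vec_le: "\<bar>(floor_vec y + indicator_vec S) $ i\<bar> \<le> 2 ^ shift_log y"
proof -
  have "\<bar>y$i\<bar> \<le> norm y" by (rule component_le_norm_cart)
  then have "\<bar>real_of_int ((floor_vec y + indicator_vec S) $ i)\<bar> \<le> norm y + 2"
    unfolding floor_vec_def indicator_vec_def abs_le_iff
    by (cases "i \<in> S") (simp_all, linarith+)
  also have "\<dots> = 2 powr (log 2 (norm y + 2))"
    by (rule powr_log_cancel[symmetric]) (auto intro: add_nonneg_pos)
  also have "\<dots> \<le> 2 powr (shift_log y)"
    unfolding shift_log_def by (intro powr_mono) (auto simp: real_nat_ceiling_ge)
  also have "\<dots> = 2 ^ shift_log y" by (simp add: powr_realpow)
  finally have "real_of_int \<bar>(floor_vec y + indicator_vec S) $ i\<bar> \<le> real_of_int (2 ^ shift_log y)" by simp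
  then show ?thesis by (simp only: of_int_le_iff)
qed

definition shifted_weak_const :: "real^'n::finite \<Rightarrow> real" where
  "shifted_weak_const y = 2 * 4 ^ CARD('n) * (3 ^ CARD('n) + real (shift_log y))"

lemma shifted_max_weak_type:
  fixes g :: "real^'n::finite \<Rightarrow> real"
  assumes g [measurable]: "g \<in> borel_measurable lebesgue" and g_nonneg: "\<And>z. 0 \<le> g z" and "0 < \<alpha>"
  shows "\<exists>W\<in>sets lebesgue. {x. ennreal \<alpha> < shifted_max y g x} \<subseteq> W \<and>
     emeasure lebesgue W \<le> ennreal (shifted_weak_const y / \<alpha>) *
       (\<integral>\<^sup>+z. ennreal (if \<alpha> / 2 < g z then g z else 0) \<partial>lebesgue)"
proof -
  define h where "h z = (if \<alpha> / 2 < g z then g z else 0)" for z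
  have h [measurable]: "h \<in> borel_measurable lebesgue" unfolding h_def by measurable
  define \<mu> where "\<mu> = \<alpha> / (2 * 2 ^ CARD('n))"
  define c where "c = (3 ^ CARD('n) + real (shift_log y)) / \<mu>"
  define I where "I = (\<integral>\<^sup>+z. ennreal (h z) \<partial>lebesgue)"
  define Bad where "Bad S = {x. \<exists>k. ennreal (\<mu> * (2 powr real_of_int k) ^ CARD('n))
     < (\<integral>\<^sup>+z. ennreal (h z) * indicator (dyadic_cube k (dyadic_index k x + (floor_vec y + indicator_vec S))) z \<partial>lebesgue)}"
    for S
  have "\<exists>W. W \<in> sets lebesgue \<and> Bad S \<subseteq> W \<and> emeasure lebesgue W \<le> ennreal c * I" for S
  proof -
    have "0 \<le> h z" for z by (simp add: h_def g_nonneg)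
    moreover have "0 < \<mu>" using \<open>0 < \<alpha>\<close> by (simp add: \<mu>_def)
    ultimately have "\<exists>W\<in>sets lebesgue. Bad S \<subseteq> W \<and> emeasure lebesgue W \<le> ennreal c * I"
      unfolding Bad_def c_def I_def
      by (rule weak_type_translated_dyadic_average[OF h _ _ abs_floor_vec_plus_indicator_vec_le])
    then show ?thesis by blast
  qed
  then have "\<exists>W. \<forall>S. W S \<in> sets lebesgue \<and> Bad S \<subseteq> W S \<and> emeasure lebesgue (W S) \<le> ennreal c * I"
    by (intro choice allI)
  then obtain W where W: "\<And>S. W S \<in> sets lebesgue" "\<And>S. Bad S \<subseteq> W S"
    "\<And>S. emeasure lebesgue (W S) \<le> ennreal c * I"
    by blast
  have cover: "{x. ennreal \<alpha> < shifted_max y g x} \<subseteq> (\<Union>S. W S)"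
  proof
    fix x assume "x \<in> {x. ennreal \<alpha> < shifted_max y g x}"
    moreover have "\<bar>g z\<bar> = g z" for z using g_nonneg by simp
    ultimately obtain k where "ennreal (\<alpha> * (2 powr k) ^ CARD('n))
        < (\<integral>\<^sup>+z. ennreal (g z) * indicator (shifted_cube k (dyadic_index k x) y) z \<partial>lebesgue)"
      using less_shifted_max_imp_average_gt[of \<alpha> y g x] \<open>0 < \<alpha>\<close> by auto
    then obtain S where "ennreal (\<mu> * (2 powr k) ^ CARD('n))
        < (\<integral>\<^sup>+z. ennreal (h z) * indicator (dyadic_cube k (dyadic_index k x + floor_vec y + indicator_vec S)) z \<partial>lebesgue)"
      using shifted_average_gt_imp_dyadic_average_gt[OF g g_nonneg \<open>0 < \<alpha>\<close>]
      unfolding h_def \<mu>_def by blast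
    then have "x \<in> Bad S" unfolding Bad_def by (auto simp: add.assoc)
    then show "x \<in> (\<Union>S. W S)" using W(2) by blast
  qed
  have measure: "emeasure lebesgue (\<Union>S. W S) \<le> ennreal (shifted_weak_const y / \<alpha>) * I"
  proof -
    have "emeasure lebesgue (\<Union>S. W S) \<le> (\<Sum>S\<in>UNIV. emeasure lebesgue (W S))"
      using W(1) by (intro emeasure_subadditive_finite) auto
    also have "\<dots> \<le> (\<Sum>S\<in>(UNIV :: 'n set set). ennreal c * I)"
      using W(3) by (intro sum_mono) auto
    also have "\<dots> = ennreal (2 ^ CARD('n) * c) * I"
      using card_Pow[of "UNIV :: 'n set"] \<open>0 < \<alpha>\<close>
      by (subst ennreal_mult') (simp_all add: Pow_UNIV ennreal_of_nat_eq_real_of_nat c_def \<mu>_def mult.assoc)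
    also have "2 ^ CARD('n) * c = shifted_weak_const y / \<alpha>"
      using \<open>0 < \<alpha>\<close> by (simp add: c_def \<mu>_def shifted_weak_const_def field_simps power_mult_distrib[symmetric])
    finally show ?thesis .
  qed
  have "(\<Union>S. W S) \<in> sets lebesgue" using W(1) by (intro sets.finite_UN) auto
  with cover measure show ?thesis unfolding I_def h_def by blast
qed

section \<open>Strong type estimate\<close>

lemma shifted_max_strong_type:
  fixes g :: "real^'n::finite \<Rightarrow> real"
  assumes g [measurable]: "g \<in> borel_measurable lebesgue" and g_nonneg: "\<And>z. 0 \<le> g z" and "1 < s"
  shows "(\<integral>\<^sup>+x. epow (shifted_max y g x) s \<partial>lebesgue)
           \<le> ennreal (shifted_weak_const y * layer_const s) * (\<integral>\<^sup>+x. ennreal (g x powr s) \<partial>lebesgue)"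
proof -
  have pos: "0 < (2::real) powr real_of_int k" for k :: int by simp
  have "\<exists>W. W \<in> sets lebesgue \<and> {x. ennreal (2 powr k) < shifted_max y g x} \<subseteq> W \<and>
      emeasure lebesgue W \<le> ennreal (shifted_weak_const y / 2 powr k) *
        (\<integral>\<^sup>+z. ennreal (if 2 powr k / 2 < g z then g z else 0) \<partial>lebesgue)" for k :: int
    using shifted_max_weak_type[OF g g_nonneg pos, of k y] unfolding Bex_def .
  then have "\<exists>W :: int \<Rightarrow> (real^'n) set. \<forall>k. W k \<in> sets lebesgue \<and> {x. ennreal (2 powr k) < shifted_max y g x} \<subseteq> W k \<and>
      emeasure lebesgue (W k) \<le> ennreal (shifted_weak_const y / 2 powr k) *
        (\<integral>\<^sup>+z. ennreal (if 2 powr k / 2 < g z then g z else 0) \<partial>lebesgue)"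
    by (intro choice allI)
  then obtain W :: "int \<Rightarrow> (real^'n) set" where W: "\<forall>k. W k \<in> sets lebesgue \<and>
      {x. ennreal (2 powr k) < shifted_max y g x} \<subseteq> W k \<and>
      emeasure lebesgue (W k) \<le> ennreal (shifted_weak_const y / 2 powr k) *
        (\<integral>\<^sup>+z. ennreal (if 2 powr k / 2 < g z then g z else 0) \<partial>lebesgue)" ..
  show ?thesis
  proof (rule nn_integral_epow_le_of_weak_type[OF g g_nonneg \<open>1 < s\<close>])
    show "0 \<le> shifted_weak_const y" by (simp add: shifted_weak_const_def)
    show "x \<in> W k" if "ennreal (2 powr real_of_int k) < shifted_max y g x" for k x
      using W that by blast
  qed (use W in blast)+
qed

lemma one_le_ln_exp_one_plus:
  fixes r :: real assumes "0 \<le> r" shows "1 \<le> ln (exp 1 + r)"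
proof -
  have "exp 1 \<le> exp 1 + r" using assms by linarith
  then have "ln (exp 1) \<le> ln (exp 1 + r)" by (subst ln_le_cancel_iff) (auto intro: add_pos_nonneg)
  then show ?thesis by simp
qed

lemma shift_log_le: "real (shift_log y) \<le> ln (exp 1 + norm y) / ln 2 + 1"
proof -
  have pos: "0 < norm y + 2" using norm_ge_zero[of y] by linarith
  then have "0 \<le> log 2 (norm y + 2)" by simp
  then have "real (shift_log y) = real_of_int \<lceil>log 2 (norm y + 2)\<rceil>" by (simp add: shift_log_def)
  also have "\<dots> \<le> log 2 (norm y + 2) + 1" by (rule of_int_ceiling_le_add_one)
  also have "log 2 (norm y + 2) \<le> log 2 (exp 1 + norm y)"
    using pos exp_ge_add_one_self[of "1::real"] by (subst log_le_cancel_iff) auto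
  finally show ?thesis by (simp add: log_def)
qed

lemma shifted_weak_const_le:
  "shifted_weak_const (y::real^'n::finite)
     \<le> 2 * 4 ^ CARD('n) * (3 ^ CARD('n) + 1 / ln 2 + 1) * ln (exp 1 + norm y)"
proof -
  define L where "L = ln (exp 1 + norm y)"
  have "1 \<le> L" unfolding L_def by (rule one_le_ln_exp_one_plus) simp
  moreover have "real (shift_log y) \<le> L / ln 2 + 1" using shift_log_le[of y] by (simp add: L_def)
  moreover have "(3::real) ^ CARD('n) \<le> 3 ^ CARD('n) * L" using \<open>1 \<le> L\<close> by simp
  ultimately have "3 ^ CARD('n) + real (shift_log y) \<le> 3 ^ CARD('n) * L + L / ln 2 + L"
    by linarith
  also have "\<dots> = (3 ^ CARD('n) + 1 / ln 2 + 1) * L" by (simp add: algebra_simps)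
  finally have "3 ^ CARD('n) + real (shift_log y) \<le> (3 ^ CARD('n) + 1 / ln 2 + 1) * L" .
  then show ?thesis
    unfolding shifted_weak_const_def L_def[symmetric] mult.assoc by (intro mult_left_mono) auto
qed

lemma shifted_max_strong_type_log:
  fixes g :: "real^'n::finite \<Rightarrow> real"
  assumes g [measurable]: "g \<in> borel_measurable lebesgue" and g_nonneg: "\<And>z. 0 \<le> g z" and "1 < s"
  shows "(\<integral>\<^sup>+x. epow (shifted_max y g x) s \<partial>lebesgue)
           \<le> ennreal (2 * 4 ^ CARD('n) * (3 ^ CARD('n) + 1 / ln 2 + 1) * layer_const s * ln (exp 1 + norm y))
             * (\<integral>\<^sup>+x. ennreal (g x powr s) \<partial>lebesgue)"
proof -
  have "shifted_weak_const y * layer_const s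
      \<le> 2 * 4 ^ CARD('n) * (3 ^ CARD('n) + 1 / ln 2 + 1) * ln (exp 1 + norm y) * layer_const s"
    using shifted_weak_const_le[of y] layer_const_nonneg[OF \<open>1 < s\<close>] by (rule mult_right_mono)
  then have "ennreal (shifted_weak_const y * layer_const s)
      \<le> ennreal (2 * 4 ^ CARD('n) * (3 ^ CARD('n) + 1 / ln 2 + 1) * layer_const s * ln (exp 1 + norm y))"
    by (intro ennreal_leI) (simp add: mult_ac)
  then show ?thesis
    by (rule order_trans[OF shifted_max_strong_type[OF g g_nonneg \<open>1 < s\<close>] mult_right_mono]) simp
qed

lemma Lp_norm_shifted_max_t:
  assumes "0 < p" "0 < t"
  shows "Lp_norm p (shifted_max_t y t f)
           = epow (\<integral>\<^sup>+x. epow (shifted_max y (\<lambda>z. \<bar>f z\<bar> powr t) x) (p / t) \<partial>lebesgue) (1 / p)"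
  using assms by (simp add: Lp_norm_def shifted_max_t_def epow_epow)

theorem theorem1p3:
  fixes p t :: real
  assumes "0 < p" and "0 < t" and "t < p"
  shows "\<exists>C::real. \<forall>(y::real ^ 'n::finite) (f::real ^ 'n \<Rightarrow> real). in_Lp p f \<longrightarrow>
           Lp_norm p (shifted_max_t y t f)
             \<le> ennreal (C * ln (exp 1 + norm y) powr (1 / p)) * Lp_norm p (\<lambda>x. ennreal \<bar>f x\<bar>)"
proof -
  define s where "s = p / t"
  have "1 < s" using assms by (simp add: s_def)
  define D :: real where "D = 2 * 4 ^ CARD('n) * (3 ^ CARD('n) + 1 / ln 2 + 1) * layer_const s"
  have "0 \<le> D" using layer_const_nonneg[OF \<open>1 < s\<close>] by (simp add: D_def)
  show ?thesis
  proof (intro exI[of _ "D powr (1 / p)"] allI impI)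
    fix y :: "real^'n" and f :: "real^'n \<Rightarrow> real"
    assume f: "in_Lp p f"
    then have [measurable]: "f \<in> borel_measurable lebesgue" by (simp add: in_Lp_def)
    have "(\<bar>f x\<bar> powr t) powr s = \<bar>f x\<bar> powr p" for x using assms by (simp add: s_def powr_powr)
    then have "(\<integral>\<^sup>+x. epow (shifted_max y (\<lambda>z. \<bar>f z\<bar> powr t) x) s \<partial>lebesgue)
        \<le> ennreal (D * ln (exp 1 + norm y)) * (\<integral>\<^sup>+x. ennreal (\<bar>f x\<bar> powr p) \<partial>lebesgue)"
      using shifted_max_strong_type_log[of "\<lambda>z. \<bar>f z\<bar> powr t" s y] \<open>1 < s\<close> by (simp add: D_def)
    then have "epow (\<integral>\<^sup>+x. epow (shifted_max y (\<lambda>z. \<bar>f z\<bar> powr t) x) s \<partial>lebesgue) (1 / p)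
        \<le> ennreal ((D * ln (exp 1 + norm y)) powr (1 / p)) * epow (\<integral>\<^sup>+x. ennreal (\<bar>f x\<bar> powr p) \<partial>lebesgue) (1 / p)"
      using f \<open>0 \<le> D\<close> one_le_ln_exp_one_plus[of "norm y"] \<open>0 < p\<close>
      by (intro epow_le_mult_epow) (auto simp: in_Lp_def)
    then show "Lp_norm p (shifted_max_t y t f)
        \<le> ennreal (D powr (1 / p) * ln (exp 1 + norm y) powr (1 / p)) * Lp_norm p (\<lambda>x. ennreal \<bar>f x\<bar>)"
      unfolding Lp_norm_shifted_max_t[OF \<open>0 < p\<close> \<open>0 < t\<close>]
      using \<open>0 \<le> D\<close> one_le_ln_exp_one_plus[of "norm y"]
      by (simp add: Lp_norm_def epow_ennreal powr_mult s_def)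
  qed
qed

end
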